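(* Let $W\subseteq\mathbb{H}$, let $x\in\mathbb{P}\mathbb{R}_+^d$ be a totally irrational direction, and let $M\in GL_{d+1}(\mathbb{Z})\cap M_{d+1}(\mathbb{N})$. If $W$ has non-empty interior for the topology $\mathcal{T}_x$, then $MW$ has non-empty interior for the topology $\mathcal{T}_{Mx}$.
   Context: $h(y)=\sum_iy_i$ on $\mathbb{R}^{d+1}$, $P=\{h=0\}$, $\mathbb{H}=\{z\in\mathbb{Z}^{d+1}:h(z)\ge0\}$. $\mathbb{P}\mathbb{R}_+^d$ is the set of positive directions, $v(x)$ the $\ell^1$-normalized representative, $Mx=[Mv(x)]$, $\pi_x(z)=z-h(z)v(x)$; $x$ is totally irrational if the coordinates of $v(x)$ are $\mathbb{Q}$-linearly independent. $\mathcal{T}_x$ is the topology on $\mathbb{H}$ whose open sets are $\pi_x^{-1}(U)\cap\mathbb{H}$ with $U\subseteq P$ open. *)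

theory Defs
  imports "HOL-Analysis.Analysis"
begin

text \<open>Ambient space R^{d+1} is modelled as real^'n for a finite index type 'n
  (so d+1 = CARD('n)); integer points are int^'n.\<close>

definition hsum :: "real^'n \<Rightarrow> real" where
  "hsum y = (\<Sum>i\<in>UNIV. y $ i)"

definition hsum_int :: "int^'n \<Rightarrow> int" where
  "hsum_int z = (\<Sum>i\<in>UNIV. z $ i)"

definition Pplane :: "(real^'n) set" where
  "Pplane = {y. hsum y = 0}"

definition Hset :: "(int^'n) set" where
  "Hset = {z. hsum_int z \<ge> 0}"

definition real_vec :: "int^'n \<Rightarrow> real^'n" where
  "real_vec z = (\<chi> i. of_int (z $ i))"

definition real_mat :: "int^'n^'n \<Rightarrow> real^'n^'n" where
  "real_mat M = (\<chi> i j. of_int (M $ i $ j))"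

text \<open>A point of the positive projective space is represented by its
  l1-normalised representative v(x): all coordinates positive, sum 1.\<close>
definition pos_dir :: "real^'n \<Rightarrow> bool" where
  "pos_dir v \<longleftrightarrow> (\<forall>i. v $ i > 0) \<and> hsum v = 1"

definition totally_irrational :: "real^'n \<Rightarrow> bool" where
  "totally_irrational v \<longleftrightarrow>
     (\<forall>q :: 'n \<Rightarrow> rat. (\<Sum>i\<in>UNIV. of_rat (q i) * v $ i) = 0 \<longrightarrow> (\<forall>i. q i = 0))"

definition act_dir :: "int^'n^'n \<Rightarrow> real^'n \<Rightarrow> real^'n" where
  "act_dir M v = (1 / hsum (real_mat M *v v)) *\<^sub>R (real_mat M *v v)"

definition proj :: "real^'n \<Rightarrow> int^'n \<Rightarrow> real^'n" where
  "proj v z = real_vec z - (of_int (hsum_int z)) *\<^sub>R v"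

definition Tx_open :: "real^'n \<Rightarrow> (int^'n) set \<Rightarrow> bool" where
  "Tx_open v S \<longleftrightarrow>
     (\<exists>U. openin (subtopology euclidean Pplane) U \<and> S = {z \<in> Hset. proj v z \<in> U})"

definition Tx :: "real^'n \<Rightarrow> (int^'n) topology" where
  "Tx v = topology (Tx_open v)"

definition GL_nat :: "int^'n^'n \<Rightarrow> bool" where
  "GL_nat M \<longleftrightarrow> (\<exists>N :: int^'n^'n. M ** N = mat 1 \<and> N ** M = mat 1)
                 \<and> (\<forall>i j. M $ i $ j \<ge> 0)"

end

theory Submission
  imports Defs "HOL-Analysis.Kronecker_Approximation_Theorem"
begin

(* Write an integer point as z = pi_x(z) + h(z) v(x). Since M is invertible over the integers,
   pi_x(z) is a linear function of pi_Mx(M z), and h(M z) = f(pi_x(z)) + h(z) f(v(x)) for the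
   linear form f = h o M, which is positive at v(x). So a small T_Mx-neighbourhood of M z consists
   of the images M z' with pi_x(z') close to pi_x(z) and h(M z') \<ge> 0; what has to be arranged is
   h(z') \<ge> 0. First, inside the T_x-open subset of W, move to a point z1 with h(M z1) \<ge> 0 by
   adding a multiple of an integer vector of positive height and tiny projection (Dirichlet's
   simultaneous approximation). Near pi_x(z1), the points z' with h(z') < 0 \<le> h(M z') have
   bounded height and so form a finite set, none of which projects onto pi_x(z1) by total
   irrationality; shrinking the neighbourhood excludes them. *)

lemma hsum_add [simp]: "hsum (x + y) = hsum x + hsum y"
  by (simp add: hsum_def sum.distrib)

lemma hsum_diff [simp]: "hsum (x - y) = hsum x - hsum y"
  by (simp add: hsum_def sum_subtractf)

lemma hsum_scaleR [simp]: "hsum (a *\<^sub>R x) = a * hsum x"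
  by (simp add: hsum_def sum_distrib_left)

lemma linear_hsum: "linear hsum"
  by (rule linearI) simp_all

lemma of_int_hsum_int: "of_int (hsum_int z) = hsum (real_vec z)"
  by (simp add: hsum_int_def hsum_def real_vec_def)

lemma hsum_int_add: "hsum_int (z + z') = hsum_int z + hsum_int z'"
  by (simp add: hsum_int_def sum.distrib)

lemma hsum_int_smult: "hsum_int (k *s z) = k * hsum_int z"
  by (simp add: hsum_int_def sum_distrib_left)

lemma real_vec_add: "real_vec (z + z') = real_vec z + real_vec z'"
  by (simp add: vec_eq_iff real_vec_def)

lemma real_vec_smult: "real_vec (k *s z) = of_int k *\<^sub>R real_vec z"
  by (simp add: vec_eq_iff real_vec_def)

lemma real_vec_mult: "real_vec (M *v z) = real_mat M *v real_vec z"
  by (simp add: vec_eq_iff real_vec_def real_mat_def matrix_vector_mult_def)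

lemma real_mat_mult: "real_mat (A ** B) = real_mat A ** real_mat B"
  by (simp add: vec_eq_iff real_mat_def matrix_matrix_mult_def)

lemma real_mat_one: "real_mat (mat 1) = mat 1"
  by (simp add: vec_eq_iff real_mat_def mat_def)

lemma of_int_hsum_int_mult: "of_int (hsum_int (M *v z)) = hsum (real_mat M *v real_vec z)"
  by (simp add: of_int_hsum_int real_vec_mult)

definition proj_real :: "real^'n \<Rightarrow> real^'n \<Rightarrow> real^'n" where
  "proj_real v y = y - hsum y *\<^sub>R v"

lemma proj_eq_proj_real: "proj v z = proj_real v (real_vec z)"
  by (simp add: proj_def proj_real_def of_int_hsum_int)

lemma linear_proj_real: "linear (proj_real v)"
  by (rule linearI) (simp_all add: proj_real_def algebra_simps)

lemma proj_real_self: "hsum v = 1 \<Longrightarrow> proj_real v v = 0"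
  by (simp add: proj_real_def)

lemma real_vec_eq_proj_plus: "real_vec z = proj v z + of_int (hsum_int z) *\<^sub>R v"
  by (simp add: proj_def)

lemma linear_real_vec_eq_proj_plus:
  fixes f :: "real^'n \<Rightarrow> real"
  shows "linear f \<Longrightarrow> f (real_vec z) = f (proj v z) + of_int (hsum_int z) * f v"
  by (metis real_vec_eq_proj_plus linear_add linear_scale real_scaleR_def)

lemma hsum_proj: "hsum v = 1 \<Longrightarrow> hsum (proj v z) = 0"
  by (simp add: proj_def of_int_hsum_int)

lemma proj_add: "proj v (z + z') = proj v z + proj v z'"
  by (simp add: proj_def hsum_int_add real_vec_add algebra_simps)

lemma proj_smult: "proj v (k *s z) = of_int k *\<^sub>R proj v z"
  by (simp add: proj_def hsum_int_smult real_vec_smult algebra_simps)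

lemma proj_act_dir:
  assumes "hsum v = 1" and "N ** M = mat 1"
  shows "proj_real v (real_mat N *v proj (act_dir M v) (M *v z)) = proj v z"
proof -
  have NM: "real_mat N *v (real_mat M *v y) = y" for y
    using assms(2) by (metis matrix_vector_mul_assoc matrix_vector_mul_lid real_mat_mult real_mat_one)
  have "real_mat N *v proj (act_dir M v) (M *v z)
      = real_vec z - (of_int (hsum_int (M *v z)) / hsum (real_mat M *v v)) *\<^sub>R v"
    by (simp add: proj_def act_dir_def real_vec_mult NM matrix_vector_mult_diff_distrib
        matrix_vector_mult_scaleR)
  then show ?thesis
    using linear_proj_real[of v] proj_real_self[OF assms(1)]
    by (simp add: linear_diff linear_scale proj_eq_proj_real)
qed

lemma hsum_mat_pos_dir_pos:
  fixes M :: "int^'n^'n"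
  assumes "GL_nat M" and "pos_dir v"
  shows "hsum (real_mat M *v v) > 0"
proof -
  obtain N where MN: "M ** N = mat 1" and M_nonneg: "\<And>i j. M $ i $ j \<ge> 0"
    using assms(1) by (auto simp: GL_nat_def)
  have v_pos: "v $ j > 0" for j
    using assms(2) by (simp add: pos_dir_def)
  have "M \<noteq> 0"
  proof
    assume "M = 0"
    then have "(mat 1 :: int^'n^'n) $ i $ i = 0" for i
      using MN by simp
    then show False
      by (simp add: mat_def)
  qed
  then obtain i j where "M $ i $ j \<noteq> 0"
    by (auto simp: vec_eq_iff)
  then have pos: "of_int (M $ i $ j) * v $ j > 0"
    using M_nonneg[of i j] v_pos[of j] by simp
  have nonneg: "of_int (M $ i' $ j') * v $ j' \<ge> 0" for i' j'
    using M_nonneg[of i' j'] v_pos[of j'] by simp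
  have "hsum (real_mat M *v v) = (\<Sum>i'\<in>UNIV. \<Sum>j'\<in>UNIV. of_int (M $ i' $ j') * v $ j')"
    by (simp add: hsum_def matrix_vector_mult_def real_mat_def)
  also have "\<dots> \<ge> of_int (M $ i $ j) * v $ j"
    by (intro member_le_sum[THEN order_trans[rotated]] member_le_sum) (auto intro: nonneg sum_nonneg)
  finally show ?thesis using pos by linarith
qed

lemma istopology_Tx_open: "istopology (Tx_open v)"
  unfolding istopology_def
proof (intro conjI allI impI ballI)
  fix S T
  assume "Tx_open v S" "Tx_open v T"
  then obtain U U' where "openin (subtopology euclidean Pplane) U" "S = {z \<in> Hset. proj v z \<in> U}"
    "openin (subtopology euclidean Pplane) U'" "T = {z \<in> Hset. proj v z \<in> U'}"
    unfolding Tx_open_def by blast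
  then show "Tx_open v (S \<inter> T)"
    unfolding Tx_open_def by (intro exI[of _ "U \<inter> U'"]) auto
next
  fix \<K>
  assume "\<forall>S\<in>\<K>. Tx_open v S"
  then obtain U where U: "\<And>S. S \<in> \<K> \<Longrightarrow>
      openin (subtopology euclidean Pplane) (U S) \<and> S = {z \<in> Hset. proj v z \<in> U S}"
    unfolding Tx_open_def by metis
  then have "\<Union>\<K> = {z \<in> Hset. proj v z \<in> \<Union>(U ` \<K>)}"
    by blast
  with U show "Tx_open v (\<Union>\<K>)"
    unfolding Tx_open_def by (intro exI[of _ "\<Union>(U ` \<K>)"]) blast
qed

lemma openin_Tx: "openin (Tx v) S \<longleftrightarrow> Tx_open v S"
  by (simp add: Tx_def topology_inverse'[OF istopology_Tx_open])

lemma Tx_interior_nonempty_obtains_ball: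
  assumes "hsum v = 1" and "(Tx v) interior_of W \<noteq> {}"
  obtains z0 e where "z0 \<in> Hset" "e > 0"
    "\<And>z. z \<in> Hset \<Longrightarrow> dist (proj v z0) (proj v z) < e \<Longrightarrow> z \<in> W"
proof -
  obtain S z0 where "openin (Tx v) S" "z0 \<in> S" "S \<subseteq> W"
    using assms(2) unfolding interior_of_def by auto
  then obtain U where U: "openin (subtopology euclidean Pplane) U" and S: "S = {z \<in> Hset. proj v z \<in> U}"
    unfolding openin_Tx Tx_open_def by blast
  then obtain e where "e > 0" and e: "\<And>y. y \<in> Pplane \<Longrightarrow> dist y (proj v z0) < e \<Longrightarrow> y \<in> U"
    using \<open>z0 \<in> S\<close> by (force simp: openin_euclidean_subtopology_iff)
  show thesis
  proof (rule that)
    show "z0 \<in> Hset" "e > 0"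
      using \<open>z0 \<in> S\<close> S \<open>e > 0\<close> by auto
    show "z \<in> W" if "z \<in> Hset" "dist (proj v z0) (proj v z) < e" for z
      using that e[of "proj v z"] hsum_proj[OF assms(1)] S \<open>S \<subseteq> W\<close>
      by (auto simp: Pplane_def dist_commute)
  qed
qed

lemma openin_Tx_preimage_ball:
  assumes "hsum w = 1" and "continuous_on UNIV g"
  shows "openin (Tx w) {y \<in> Hset. dist p (g (proj w y)) < r}"
proof -
  have "openin (subtopology euclidean Pplane) (Pplane \<inter> g -` ball p r)"
    using open_vimage[OF open_ball assms(2)] by (simp add: openin_open_Int)
  moreover have "{y \<in> Hset. dist p (g (proj w y)) < r}
      = {y \<in> Hset. proj w y \<in> Pplane \<inter> g -` ball p r}"
    using hsum_proj[OF assms(1)] by (auto simp: Pplane_def)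
  ultimately show ?thesis
    unfolding openin_Tx Tx_open_def by blast
qed

lemma finite_int_box: "finite {z::int^'n. \<forall>i. \<bar>z $ i\<bar> \<le> B}"
proof -
  have "finite (Pi UNIV (\<lambda>_::'n. {-B..B}))"
    using finite_PiE[of "UNIV::'n set" "\<lambda>_. {-B..B}"] by (simp add: PiE_UNIV_domain)
  then have "finite (vec_nth -` Pi UNIV (\<lambda>_::'n. {-B..B}))"
    by (rule finite_vimageI) (simp add: inj_def vec_eq_iff)
  moreover have "{z::int^'n. \<forall>i. \<bar>z $ i\<bar> \<le> B} \<subseteq> vec_nth -` Pi UNIV (\<lambda>_::'n. {-B..B})"
    by (force simp: abs_le_iff)
  ultimately show ?thesis
    by (rule finite_subset[rotated])
qed

lemma finite_int_vecs_norm_le: "finite {z::int^'n. norm (real_vec z) \<le> B}"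
proof (rule finite_subset[OF _ finite_int_box[of "\<lceil>B\<rceil>"]], safe)
  fix z :: "int^'n" and i
  assume "norm (real_vec z) \<le> B"
  moreover have "\<bar>real_vec z $ i\<bar> \<le> norm (real_vec z)"
    by (rule component_le_norm_cart)
  ultimately show "\<bar>z $ i\<bar> \<le> \<lceil>B\<rceil>"
    by (simp add: real_vec_def) linarith
qed

lemma simultaneous_approx_proj:
  fixes v :: "real^'n"
  assumes "hsum v = 1" and "\<epsilon> > 0"
  obtains a where "hsum_int a > 0" "norm (proj v a) < \<epsilon>"
proof -
  define k where "k = CARD('n)"
  obtain N :: nat where N: "max k (k / \<epsilon>) < N"
    using reals_Archimedean2 by blast
  then have "N > 0" "k < N" "k / N < \<epsilon>"
    using \<open>\<epsilon> > 0\<close> by (auto simp: field_simps)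
  obtain f where f: "bij_betw f {0..<k} (UNIV::'n set)"
    using ex_bij_betw_nat_finite[of "UNIV::'n set"] unfolding k_def by auto
  obtain q p where "q > 0" and qp: "\<And>i. i < k \<Longrightarrow> \<bar>of_int q * v $ f i - of_int (p i)\<bar> < 1 / N"
    using Dirichlet_approx_simult[OF \<open>N > 0\<close>, where \<theta>="\<lambda>i. v $ f i" and n=k] by blast
  define a :: "int^'n" where "a = (\<chi> j. p (inv_into {0..<k} f j))"
  have approx: "\<bar>real_vec a $ j - of_int q * v $ j\<bar> < 1 / N" for j
    using qp[of "inv_into {0..<k} f j"] f bij_betw_inv_into_right[OF f] bij_betwE[OF bij_betw_inv_into[OF f]]
    by (force simp: a_def real_vec_def abs_minus_commute)
  have "\<bar>hsum (real_vec a) - of_int q\<bar> = \<bar>\<Sum>j\<in>UNIV. real_vec a $ j - of_int q * v $ j\<bar>"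
    using assms(1) by (simp add: hsum_def sum_subtractf sum_distrib_left[symmetric])
  also have "\<dots> \<le> (\<Sum>j\<in>UNIV. \<bar>real_vec a $ j - of_int q * v $ j\<bar>)"
    by (rule sum_abs)
  also have "\<dots> < k / N"
    using sum_strict_mono[of "UNIV::'n set", OF _ _ approx] by (simp add: k_def)
  also have "\<dots> < 1"
    using \<open>k < N\<close> by simp
  finally have "\<bar>of_int (hsum_int a - q)\<bar> < (1::real)"
    by (simp add: of_int_hsum_int)
  then have "hsum_int a = q"
    by linarith
  have "norm (proj v a) \<le> (\<Sum>j\<in>UNIV. \<bar>real_vec a $ j - of_int q * v $ j\<bar>)"
    using norm_le_l1_cart[of "proj v a"] by (simp add: proj_def \<open>hsum_int a = q\<close>)
  also have "\<dots> < k / N"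
    using sum_strict_mono[of "UNIV::'n set", OF _ _ approx] by (simp add: k_def)
  finally show thesis
    using that[of a] \<open>q > 0\<close> \<open>hsum_int a = q\<close> \<open>k / N < \<epsilon>\<close> by simp
qed

lemma totally_irrational_rational_singleton:
  fixes v :: "real^'n" and i j :: 'n
  assumes "totally_irrational v" and "\<And>k. v $ k \<noteq> 0" and "\<And>k. v $ k \<in> \<rat>"
  shows "i = j"
proof (rule ccontr)
  assume "i \<noteq> j"
  obtain r s where r: "v $ i = of_rat r" and s: "v $ j = of_rat s"
    using assms(3) by (metis Rats_cases)
  define q where "q k = (if k = i then s else 0) - (if k = j then r else 0)" for k
  have "(\<Sum>k\<in>UNIV. of_rat (q k) * v $ k)
      = (\<Sum>k\<in>UNIV. if k = i then of_rat s * v $ k else 0)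
        - (\<Sum>k\<in>UNIV. if k = j then of_rat r * v $ k else 0)"
    unfolding sum_subtractf[symmetric] by (rule sum.cong) (auto simp: q_def of_rat_diff left_diff_distrib)
  also have "\<dots> = 0"
    by (simp add: r s)
  finally have "q i = 0"
    using assms(1) unfolding totally_irrational_def by blast
  then have "v $ j = 0"
    using \<open>i \<noteq> j\<close> by (simp add: q_def s)
  with assms(2) show False
    by blast
qed

lemma proj_collision_rational:
  assumes "proj v z = proj v z'" and "hsum_int z \<noteq> hsum_int z'"
  shows "v $ i \<in> \<rat>"
proof -
  define t where "t = hsum_int z' - hsum_int z"
  have "real_vec z' - real_vec z = of_int t *\<^sub>R v"
    using assms(1) by (simp add: proj_def t_def algebra_simps)
  then have "v $ i = of_int (z' $ i - z $ i) / of_int t"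
    using assms(2) by (auto simp: vec_eq_iff real_vec_def field_simps t_def)
  then show ?thesis
    by simp
qed

lemma proj_collision_Pplane_trivial:
  fixes v :: "real^'n"
  assumes "pos_dir v" and "totally_irrational v"
    and "proj v z = proj v z'" and "hsum_int z \<noteq> hsum_int z'"
  shows "Pplane = {0 :: real^'n}"
proof -
  have single: "i = j" for i j :: 'n
    using totally_irrational_rational_singleton[OF assms(2)] proj_collision_rational[OF assms(3,4)]
      assms(1) by (metis less_irrefl pos_dir_def)
  have "y = 0" if "hsum y = 0" for y :: "real^'n"
  proof -
    have "hsum y = y $ i" for i
    proof -
      have "UNIV = {i}"
        using single by auto
      then have "hsum y = (\<Sum>k\<in>{i}. y $ k)"
        by (simp only: hsum_def)
      then show ?thesis
        by simp
    qed
    then show ?thesis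
      using that by (simp add: vec_eq_iff)
  qed
  then show ?thesis
    by (auto simp: Pplane_def hsum_def)
qed

lemma Hset_approx_linear_nonneg:
  fixes v :: "real^'n" and f :: "real^'n \<Rightarrow> real"
  assumes "hsum v = 1" and "linear f" and "f v > 0" and "z0 \<in> Hset" and "e > 0"
  obtains z1 where "z1 \<in> Hset" "f (real_vec z1) \<ge> 0" "dist (proj v z0) (proj v z1) < e"
proof -
  obtain B where "B > 0" and B: "\<And>x. \<bar>f x\<bar> \<le> B * norm x"
    using linear_bounded_pos[OF assms(2)] by auto
  obtain j :: nat where j: "2 * \<bar>f (real_vec z0)\<bar> / f v < j"
    using reals_Archimedean2 by blast
  then have "j > 0"
    using assms(3) by (metis divide_nonneg_pos abs_ge_zero mult_nonneg_nonneg zero_le_numeral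
        of_nat_0_less_iff order_le_less_trans)
  obtain a where "hsum_int a > 0" and a: "norm (proj v a) < min (e / j) (f v / (2 * B))"
    using simultaneous_approx_proj[OF assms(1), of "min (e / j) (f v / (2 * B))"]
      \<open>j > 0\<close> \<open>B > 0\<close> assms(3,5) by auto
  define z1 where "z1 = z0 + int j *s a"
  show thesis
  proof (rule that[of z1])
    show "z1 \<in> Hset"
      using assms(4) \<open>hsum_int a > 0\<close> by (simp add: Hset_def z1_def hsum_int_add hsum_int_smult)
    have "dist (proj v z0) (proj v z1) = j * norm (proj v a)"
      by (simp add: z1_def proj_add proj_smult dist_norm)
    also have "\<dots> < e"
      using a \<open>j > 0\<close> by (simp add: field_simps)
    finally show "dist (proj v z0) (proj v z1) < e" .
    have "\<bar>f (proj v a)\<bar> < f v / 2"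
      using B[of "proj v a"] a \<open>B > 0\<close> by (simp add: field_simps)
    moreover have "f (real_vec a) = f (proj v a) + of_int (hsum_int a) * f v"
      by (rule linear_real_vec_eq_proj_plus[OF assms(2)])
    moreover have "of_int (hsum_int a) * f v \<ge> f v"
      using \<open>hsum_int a > 0\<close> assms(3) by simp
    ultimately have "f (real_vec a) \<ge> f v / 2"
      by linarith
    moreover have "f (real_vec z1) = f (real_vec z0) + j * f (real_vec a)"
      using assms(2) by (simp add: z1_def real_vec_add real_vec_smult linear_add linear_scale)
    moreover have "j * (f v / 2) \<ge> \<bar>f (real_vec z0)\<bar>"
      using j assms(3) by (simp add: field_simps)
    ultimately show "f (real_vec z1) \<ge> 0"
      using mult_left_mono[of "f v / 2" "f (real_vec a)" j] by linarith
  qed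
qed

lemma finite_below_Hset_near:
  fixes v :: "real^'n" and f :: "real^'n \<Rightarrow> real"
  assumes "linear f" and "f v > 0"
  shows "finite {z. hsum_int z < 0 \<and> f (real_vec z) \<ge> 0 \<and> dist p (proj v z) < 1}"
proof -
  obtain B where "B > 0" and B: "\<And>x. \<bar>f x\<bar> \<le> B * norm x"
    using linear_bounded_pos[OF assms(1)] by auto
  define K where "K = B * (norm p + 1) / f v"
  have "norm (real_vec z) \<le> norm p + 1 + K * norm v"
    if "hsum_int z < 0" "f (real_vec z) \<ge> 0" "dist p (proj v z) < 1" for z
  proof -
    have np: "norm (proj v z) \<le> norm p + 1"
      using norm_triangle_sub[of "proj v z" p] that(3) by (simp add: dist_norm norm_minus_commute)
    have "- of_int (hsum_int z) * f v \<le> f (proj v z)"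
      using that(2) linear_real_vec_eq_proj_plus[OF assms(1), of z v] by simp
    also have "\<dots> \<le> B * (norm p + 1)"
      using B[of "proj v z"] np \<open>B > 0\<close> by (smt (verit) mult_left_mono)
    finally have "\<bar>of_int (hsum_int z)\<bar> \<le> K"
      using that(1) assms(2) by (simp add: K_def field_simps)
    then have "\<bar>of_int (hsum_int z)\<bar> * norm v \<le> K * norm v"
      by (simp add: mult_right_mono)
    then show ?thesis
      using norm_triangle_ineq[of "proj v z" "of_int (hsum_int z) *\<^sub>R v"] np
      by (simp add: real_vec_eq_proj_plus[symmetric])
  qed
  then show ?thesis
    by (blast intro: finite_subset[OF _ finite_int_vecs_norm_le])
qed

lemma Hset_near_proj_linear_nonneg:
  fixes v :: "real^'n" and f :: "real^'n \<Rightarrow> real"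
  assumes "pos_dir v" and "totally_irrational v" and "linear f" and "f v > 0" and "z1 \<in> Hset"
  obtains r where "r > 0"
    "\<And>z. f (real_vec z) \<ge> 0 \<Longrightarrow> dist (proj v z1) (proj v z) < r \<Longrightarrow> z \<in> Hset"
proof -
  define p1 where "p1 = proj v z1"
  define F where "F = {z. hsum_int z < 0 \<and> f (real_vec z) \<ge> 0 \<and> dist p1 (proj v z) < 1}"
  have "finite F"
    unfolding F_def using finite_below_Hset_near[OF assms(3,4)] .
  have proj_ne: "proj v z \<noteq> p1" if "z \<in> F" for z
  proof
    assume "proj v z = p1"
    moreover have "hsum_int z \<noteq> hsum_int z1"
      using that assms(5) by (auto simp: F_def Hset_def)
    ultimately have "Pplane = {0 :: real^'n}"
      using proj_collision_Pplane_trivial[OF assms(1,2)] by (simp add: p1_def)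
    moreover have "p1 \<in> Pplane"
      using assms(1) by (simp add: p1_def Pplane_def pos_dir_def hsum_proj)
    ultimately have "proj v z = 0"
      using \<open>proj v z = p1\<close> by blast
    then have "f (real_vec z) = of_int (hsum_int z) * f v"
      using linear_real_vec_eq_proj_plus[OF assms(3), of z v] linear_0[OF assms(3)] by simp
    also have "\<dots> < 0"
      using that assms(4) by (simp add: F_def mult_neg_pos)
    finally show False
      using that by (simp add: F_def)
  qed
  then have dist_pos: "dist p1 (proj v z) > 0" if "z \<in> F" for z
    using proj_ne[OF that] by (simp add: dist_commute)
  define r where "r = Min (insert 1 ((\<lambda>z. dist p1 (proj v z)) ` F))"
  show thesis
  proof (rule that[of r])
    show "r > 0"
      using \<open>finite F\<close> dist_pos by (simp add: r_def)
    show "z \<in> Hset" if "f (real_vec z) \<ge> 0" "dist (proj v z1) (proj v z) < r" for z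
    proof (rule ccontr)
      assume "z \<notin> Hset"
      moreover have "r \<le> 1"
        using \<open>finite F\<close> by (simp add: r_def)
      ultimately have "z \<in> F"
        using that by (simp add: F_def Hset_def p1_def)
      then have "r \<le> dist p1 (proj v z)"
        using \<open>finite F\<close> by (simp add: r_def)
      with that(2) show False
        by (simp add: p1_def)
    qed
  qed
qed

lemma image_interior_Tx_act_dir:
  fixes M :: "int^'n^'n"
  assumes "hsum v = 1" and "M ** N = mat 1" and "N ** M = mat 1" and "hsum (real_mat M *v v) \<noteq> 0"
    and "r > 0" and "hsum_int (M *v z1) \<ge> 0"
    and W: "\<And>z. hsum_int (M *v z) \<ge> 0 \<Longrightarrow> dist (proj v z1) (proj v z) < r \<Longrightarrow> z \<in> W"
  shows "M *v z1 \<in> (Tx (act_dir M v)) interior_of ((\<lambda>z. M *v z) ` W)"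
proof -
  define w where "w = act_dir M v"
  define g where "g y = proj_real v (real_mat N *v y)" for y
  have "hsum w = 1"
    using assms(4) by (simp add: w_def act_dir_def)
  have g_proj: "g (proj w (M *v z)) = proj v z" for z
    unfolding g_def w_def by (rule proj_act_dir[OF assms(1,3)])
  have "continuous_on UNIV g"
    unfolding g_def using linear_compose[OF matrix_vector_mul_linear linear_proj_real]
    by (intro linear_continuous_on) (simp add: o_def linear_conv_bounded_linear)
  define T where "T = {y \<in> Hset. dist (proj v z1) (g (proj w y)) < r}"
  have "openin (Tx w) T"
    unfolding T_def by (rule openin_Tx_preimage_ball[OF \<open>hsum w = 1\<close> \<open>continuous_on UNIV g\<close>])
  moreover have "M *v z1 \<in> T"
    using assms(5,6) by (simp add: T_def Hset_def g_proj)
  moreover have "T \<subseteq> (\<lambda>z. M *v z) ` W"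
  proof
    fix y
    assume "y \<in> T"
    have "M *v (N *v y) = y"
      by (simp add: matrix_vector_mul_assoc assms(2))
    moreover have "N *v y \<in> W"
      using W[of "N *v y"] \<open>y \<in> T\<close> g_proj[of "N *v y"] \<open>M *v (N *v y) = y\<close>
      by (auto simp: T_def Hset_def)
    ultimately show "y \<in> (\<lambda>z. M *v z) ` W"
      by (metis image_eqI)
  qed
  ultimately show ?thesis
    unfolding interior_of_def w_def by blast
qed

theorem lemma3p17:
  fixes W :: "(int^'n) set" and v :: "real^'n" and M :: "int^'n^'n"
  assumes "W \<subseteq> Hset"
    and "pos_dir v" and "totally_irrational v"
    and "GL_nat M"
    and "(Tx v) interior_of W \<noteq> {}"
  shows "(Tx (act_dir M v)) interior_of ((\<lambda>z. M *v z) ` W) \<noteq> {}"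
proof -
  obtain N where MN: "M ** N = mat 1" and NM: "N ** M = mat 1"
    using assms(4) by (auto simp: GL_nat_def)
  define f where "f x = hsum (real_mat M *v x)" for x
  have hv: "hsum v = 1"
    using assms(2) by (simp add: pos_dir_def)
  have "linear f"
    unfolding f_def using linear_compose[OF matrix_vector_mul_linear linear_hsum] by (simp add: o_def)
  have "f v > 0"
    unfolding f_def by (rule hsum_mat_pos_dir_pos[OF assms(4,2)])
  have f_real_vec: "f (real_vec z) = of_int (hsum_int (M *v z))" for z
    by (simp add: f_def of_int_hsum_int_mult)
  obtain z0 e where "z0 \<in> Hset" "e > 0"
    and z0: "\<And>z. z \<in> Hset \<Longrightarrow> dist (proj v z0) (proj v z) < e \<Longrightarrow> z \<in> W"
    using Tx_interior_nonempty_obtains_ball[OF hv assms(5)] by blast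
  obtain z1 where "z1 \<in> Hset" "f (real_vec z1) \<ge> 0" and z1: "dist (proj v z0) (proj v z1) < e / 2"
    using Hset_approx_linear_nonneg[OF hv \<open>linear f\<close> \<open>f v > 0\<close> \<open>z0 \<in> Hset\<close>, of "e / 2"]
      \<open>e > 0\<close> by auto
  obtain r where "r > 0"
    and r: "\<And>z. f (real_vec z) \<ge> 0 \<Longrightarrow> dist (proj v z1) (proj v z) < r \<Longrightarrow> z \<in> Hset"
    using Hset_near_proj_linear_nonneg[OF assms(2,3) \<open>linear f\<close> \<open>f v > 0\<close> \<open>z1 \<in> Hset\<close>]
    by blast
  have "M *v z1 \<in> (Tx (act_dir M v)) interior_of ((\<lambda>z. M *v z) ` W)"
  proof (rule image_interior_Tx_act_dir[OF hv MN NM])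
    show "hsum (real_mat M *v v) \<noteq> 0"
      using \<open>f v > 0\<close> by (simp add: f_def)
    show "min r (e / 2) > 0" "hsum_int (M *v z1) \<ge> 0"
      using \<open>r > 0\<close> \<open>e > 0\<close> \<open>f (real_vec z1) \<ge> 0\<close> by (simp_all add: f_real_vec)
    show "z \<in> W" if "hsum_int (M *v z) \<ge> 0" "dist (proj v z1) (proj v z) < min r (e / 2)" for z
      using that r[of z] z0[of z] z1 dist_triangle[of "proj v z0" "proj v z" "proj v z1"]
      by (simp add: f_real_vec)
  qed
  then show ?thesis
    by blast
qed

end
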